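(* Let $m$, $c$, $d$ be positive integers with $m-2c-1>0$. Let $\mathbf{w}_{c+1},\dots,\mathbf{w}_m\in\mathbb{R}^d$ (the benign local models), let $\mathbf{w}_{Re}\in\mathbb{R}^d$, and let $\mathbf{s}\in\{-1,1\}^d$. Consider the optimization problem over $\lambda>0$: $$\max_{\lambda}\ \lambda \quad\text{subject to}\quad \mathbf{w}_1'=\mathrm{Krum}(\mathbf{w}_1',\dots,\mathbf{w}_c',\mathbf{w}_{c+1},\dots,\mathbf{w}_m),\quad \mathbf{w}_1'=\mathbf{w}_{Re}-\lambda\mathbf{s},\quad \mathbf{w}_i'=\mathbf{w}_1' \text{ for } i=2,\dots,c,$$ where the first constraint means that Krum, applied to these $m$ vectors with parameter $c$, selects $\mathbf{w}_1'$. Suppose $\lambda$ is a solution to this optimization problem. Then $$\lambda\le\sqrt{\frac{1}{(m-2c-1)d}\cdot\min_{c+1\le i\le m}\sum_{l\in\tilde{\Gamma}_{\mathbf{w}_i}^{m-c-2}}D^2(\mathbf{w}_l,\mathbf{w}_i)}\;+\;\frac{1}{\sqrt{d}}\cdot\max_{c+1\le i\le m}D(\mathbf{w}_i,\mathbf{w}_{Re}),$$ where $D(\cdot,\cdot)$ is Euclidean distance and $\tilde{\Gamma}_{\mathbf{w}_i}^{m-c-2}$ is the set of (indices of) the $m-c-2$ benign local models among $\mathbf{w}_{c+1},\dots,\mathbf{w}_m$, other than $\mathbf{w}_i$ itself, that have the smallest Euclidean distance to $\mathbf{w}_i$.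
   Context: Krum aggregation rule with parameter $c$ (an assumed upper bound on the number of compromised devices): given $m$ local models $\mathbf{v}_1,\dots,\mathbf{v}_m\in\mathbb{R}^d$, for each $\mathbf{v}_i$ compute the $m-c-2$ local models among the others that are closest to $\mathbf{v}_i$ in Euclidean distance, and let the score of $\mathbf{v}_i$ be the sum of the squared Euclidean distances from $\mathbf{v}_i$ to these $m-c-2$ models. Krum outputs (selects) a local model with the smallest score. In the setting, $\mathbf{w}_1',\dots,\mathbf{w}_c'$ are the crafted local models of the $c$ compromised devices and $d$ is the number of model parameters. *)

theory Defs
  imports "HOL-Analysis.Analysis"
begin

definition nearest_sqdist_sum :: "nat \<Rightarrow> (nat \<Rightarrow> 'a::metric_space) \<Rightarrow> nat set \<Rightarrow> nat \<Rightarrow> real" where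
  "nearest_sqdist_sum k v I i =
     sum_list (take k (sort (map (\<lambda>j. (dist (v i) (v j))^2) (sorted_list_of_set (I - {i})))))"

definition krum_score :: "nat \<Rightarrow> nat \<Rightarrow> (nat \<Rightarrow> 'a::metric_space) \<Rightarrow> nat \<Rightarrow> real" where
  "krum_score m c v i = nearest_sqdist_sum (m - c - 2) v {1..m} i"

definition krum_outputs :: "nat \<Rightarrow> nat \<Rightarrow> (nat \<Rightarrow> 'a::metric_space) \<Rightarrow> 'a \<Rightarrow> bool" where
  "krum_outputs m c v x \<longleftrightarrow>
     (\<exists>i\<in>{1..m}. v i = x \<and> (\<forall>j\<in>{1..m}. krum_score m c v i \<le> krum_score m c v j))"

definition attacked_models ::
  "nat \<Rightarrow> (nat \<Rightarrow> real^'d) \<Rightarrow> real^'d \<Rightarrow> real^'d \<Rightarrow> real \<Rightarrow> nat \<Rightarrow> real^'d" where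
  "attacked_models c w wRe s lam j = (if 1 \<le> j \<and> j \<le> c then wRe - lam *\<^sub>R s else w j)"

definition krum_attack_feasible ::
  "nat \<Rightarrow> nat \<Rightarrow> (nat \<Rightarrow> real^'d) \<Rightarrow> real^'d \<Rightarrow> real^'d \<Rightarrow> real \<Rightarrow> bool" where
  "krum_attack_feasible m c w wRe s lam \<longleftrightarrow>
     lam > 0 \<and> krum_outputs m c (attacked_models c w wRe s lam) (wRe - lam *\<^sub>R s)"

end

theory Submission
  imports Defs
begin

(* Let x = wRe - lam s be the model selected by Krum and rho the distance from x to the nearest
   benign model. Every model strictly closer to x than rho is crafted, so at most c - 1 of the
   m - c - 2 nearest neighbours of the selected index lie within distance rho, and its score is
   at least (m - 2c - 1) rho^2. Krum minimises the score, and the score of a benign model is at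
   most its nearest-neighbour sum among the benign models alone, so (m - 2c - 1) rho^2 is bounded
   by the minimum of these sums. Since |x - wRe| = lam sqrt d, the triangle inequality through the
   nearest benign model gives the bound. *)

lemma sorted_prefix_sum_le_submultiset:
  fixes zs ys :: "'a::linordered_ab_group_add list"
  assumes "sorted zs" and "mset ys \<subseteq># mset zs"
  shows "sum_list (take (length ys) zs) \<le> sum_list ys"
  using assms
proof (induction zs arbitrary: ys)
  case Nil
  then show ?case by simp
next
  case (Cons a zs)
  have sorted: "sorted zs" and a_least: "\<forall>x\<in>set zs. a \<le> x"
    using Cons.prems(1) by auto
  show ?case
  proof (cases "a \<in> set ys")
    case True
    then have ys: "mset ys = add_mset a (mset (remove1 a ys))" by simp
    then have "mset (remove1 a ys) \<subseteq># mset zs"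
      using Cons.prems(2) by (metis mset.simps(2) mset_subset_eq_add_mset_cancel)
    moreover have "sum_list ys = a + sum_list (remove1 a ys)"
      using ys by (metis sum_mset.add_mset sum_mset_sum_list)
    moreover have "length ys = Suc (length (remove1 a ys))"
      using ys by (metis size_add_mset size_mset)
    ultimately show ?thesis using Cons.IH[OF sorted] by simp
  next
    case False
    then have sub: "mset ys \<subseteq># mset zs"
      using Cons.prems(2)
      by (metis Diff_eq_empty_iff_mset in_multiset_in_set minus_add_mset_if_not_in_lhs mset.simps(2))
    show ?thesis
    proof (cases ys)
      case Nil
      then show ?thesis by simp
    next
      case (Cons b ys')
      with sub have "b \<in> set zs" and "mset ys' \<subseteq># mset zs"
        by (auto dest: mset_subset_eqD mset_subset_eq_insertD)
      with Cons.IH[OF sorted] a_least show ?thesis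
        using \<open>ys = b # ys'\<close> by (simp add: add_mono)
    qed
  qed
qed

lemma sum_take_sort_antimono:
  fixes xs ys :: "'a::linordered_ab_group_add list"
  assumes "mset ys \<subseteq># mset xs" and "k \<le> length ys"
  shows "sum_list (take k (sort xs)) \<le> sum_list (take k (sort ys))"
proof -
  have "mset (take k (sort ys)) \<subseteq># mset (sort ys)"
    by (metis append_take_drop_id mset_append mset_subset_eq_add_left)
  then have "mset (take k (sort ys)) \<subseteq># mset (sort xs)"
    using assms(1) by (metis mset_sort subset_mset.order_trans)
  from sorted_prefix_sum_le_submultiset[OF sorted_sort this] show ?thesis
    using assms(2) by simp
qed

lemma sum_take_sort_ge_count_below:
  fixes xs :: "'a::linordered_idom list"
  assumes nonneg: "\<forall>x\<in>set xs. 0 \<le> x" and "0 \<le> \<mu>" and "k \<le> length xs"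
  shows "of_nat (k - length (filter (\<lambda>x. x < \<mu>) xs)) * \<mu> \<le> sum_list (take k (sort xs))"
proof -
  define ys where "ys = take k (sort xs)"
  have "mset ys \<subseteq># mset xs"
    unfolding ys_def by (metis append_take_drop_id mset_append mset_sort mset_subset_eq_add_left)
  then have "length (filter (\<lambda>x. x < \<mu>) ys) \<le> length (filter (\<lambda>x. x < \<mu>) xs)"
    by (metis mset_filter multiset_filter_mono size_mset size_mset_mono)
  moreover have "length ys = k" unfolding ys_def using assms(3) by simp
  ultimately have "k - length (filter (\<lambda>x. x < \<mu>) xs) \<le> length (filter (\<lambda>x. \<not> x < \<mu>) ys)"
    using sum_length_filter_compl[of "\<lambda>x. x < \<mu>" ys] by linarith
  then have "of_nat (k - length (filter (\<lambda>x. x < \<mu>) xs)) * \<mu>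
      \<le> of_nat (length (filter (\<lambda>x. \<not> x < \<mu>) ys)) * \<mu>"
    using \<open>0 \<le> \<mu>\<close> by (intro mult_right_mono) auto
  also have "\<dots> = sum_list (map (\<lambda>x. if x < \<mu> then 0 else \<mu>) ys)"
    by (induction ys) (auto simp: algebra_simps)
  also have "\<dots> \<le> sum_list ys"
  proof -
    have "set ys \<subseteq> set xs" unfolding ys_def by (metis set_sort set_take_subset)
    with nonneg show ?thesis
      using sum_list_mono[of ys "\<lambda>x. if x < \<mu> then 0 else \<mu>" "\<lambda>x. x"] by fastforce
  qed
  finally show ?thesis unfolding ys_def .
qed

lemma mset_sorted_list_of_set: "mset (sorted_list_of_set A) = mset_set A"
  by (metis mset_sorted_list_of_multiset sorted_list_of_mset_set)

lemma nearest_sqdist_sum_cong: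
  assumes "\<And>j. j \<in> I \<Longrightarrow> v j = u j" and "i \<in> I"
  shows "nearest_sqdist_sum k v I i = nearest_sqdist_sum k u I i"
  unfolding nearest_sqdist_sum_def using assms by (cases "finite I")
    (auto intro!: map_cong arg_cong[where f = "\<lambda>xs. sum_list (take k (sort xs))"])

lemma nearest_sqdist_sum_nonneg: "0 \<le> nearest_sqdist_sum k v I i"
  unfolding nearest_sqdist_sum_def by (rule sum_list_nonneg) (auto dest!: in_set_takeD)

lemma nearest_sqdist_sum_antimono:
  assumes "finite J" and "I \<subseteq> J" and "k \<le> card (I - {i})"
  shows "nearest_sqdist_sum k v J i \<le> nearest_sqdist_sum k v I i"
proof -
  define f where "f = (\<lambda>j. (dist (v i) (v j))\<^sup>2)"
  have "mset (map f (sorted_list_of_set (I - {i}))) \<subseteq># mset (map f (sorted_list_of_set (J - {i})))"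
    using assms(1,2) by (auto simp: mset_sorted_list_of_set
        intro!: image_mset_subseteq_mono subset_imp_msubset_mset_set)
  from sum_take_sort_antimono[OF this] show ?thesis
    unfolding nearest_sqdist_sum_def f_def[symmetric] using assms by (simp add: finite_subset)
qed

lemma nearest_sqdist_sum_ge_count_closer:
  assumes "finite I" and "0 \<le> \<mu>" and "k \<le> card (I - {i})"
  shows "real (k - card {j \<in> I - {i}. (dist (v i) (v j))\<^sup>2 < \<mu>}) * \<mu> \<le> nearest_sqdist_sum k v I i"
proof -
  define f where "f = (\<lambda>j. (dist (v i) (v j))\<^sup>2)"
  define L where "L = sorted_list_of_set (I - {i})"
  have "length (filter (\<lambda>x. x < \<mu>) (map f L)) = card {j \<in> I - {i}. f j < \<mu>}"
    using assms(1) by (simp add: L_def filter_map distinct_card[symmetric])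
  moreover have "k \<le> length (map f L)" using assms(1,3) by (simp add: L_def)
  ultimately show ?thesis
    using sum_take_sort_ge_count_below[of "map f L" \<mu> k] assms(2)
    unfolding nearest_sqdist_sum_def f_def[symmetric] L_def[symmetric] by (simp add: f_def)
qed

lemma krum_output_close_to_benign:
  fixes v w :: "nat \<Rightarrow> 'a::metric_space"
  assumes "2 * c + 1 < m"
    and "krum_outputs m c v x"
    and benign: "\<And>j. j \<in> {c+1..m} \<Longrightarrow> v j = w j"
  obtains j where "j \<in> {c+1..m}"
    and "real (m - 2 * c - 1) * (dist x (w j))\<^sup>2
           \<le> Min ((\<lambda>i. nearest_sqdist_sum (m - c - 2) w {c+1..m} i) ` {c+1..m})"
proof -
  define B where "B = {c+1..m}"
  obtain i0 where i0: "i0 \<in> {1..m}" "v i0 = x"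
    and i0_min: "\<And>j. j \<in> {1..m} \<Longrightarrow> krum_score m c v i0 \<le> krum_score m c v j"
    using assms(2) unfolding krum_outputs_def by blast
  obtain j0 where j0: "j0 \<in> B" and j0_nearest: "\<And>j. j \<in> B \<Longrightarrow> dist x (w j0) \<le> dist x (w j)"
    using ex_is_arg_min_if_finite[of B "\<lambda>j. dist x (w j)"] assms(1)
    unfolding is_arg_min_def B_def by (auto simp: not_less)
  define \<rho> where "\<rho> = (dist x (w j0))\<^sup>2"
  have score_i0: "real (m - 2 * c - 1) * \<rho> \<le> krum_score m c v i0"
  proof (cases "i0 \<in> B")
    case True
    then have "\<rho> = 0"
      using j0_nearest[of i0] benign i0(2) unfolding \<rho>_def B_def by simp
    then show ?thesis by (simp add: krum_score_def nearest_sqdist_sum_nonneg)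
  next
    case False
    with i0 have "i0 \<in> {1..c}" unfolding B_def by auto
    have "{j \<in> {1..m} - {i0}. (dist (v i0) (v j))\<^sup>2 < \<rho>} \<subseteq> {1..c} - {i0}"
    proof
      fix j assume j: "j \<in> {j \<in> {1..m} - {i0}. (dist (v i0) (v j))\<^sup>2 < \<rho>}"
      show "j \<in> {1..c} - {i0}"
      proof (rule ccontr)
        assume "j \<notin> {1..c} - {i0}"
        with j have "j \<in> B" unfolding B_def by auto
        then have "\<rho> \<le> (dist (v i0) (v j))\<^sup>2"
          using j0_nearest[of j] benign[of j] i0(2) unfolding \<rho>_def B_def
          by (simp add: power_mono)
        with j show False by simp
      qed
    qed
    then have "card {j \<in> {1..m} - {i0}. (dist (v i0) (v j))\<^sup>2 < \<rho>} \<le> card ({1..c} - {i0})"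
      by (intro card_mono) auto
    also have "\<dots> = c - 1" using \<open>i0 \<in> {1..c}\<close> by simp
    finally have "m - 2 * c - 1 \<le> m - c - 2 - card {j \<in> {1..m} - {i0}. (dist (v i0) (v j))\<^sup>2 < \<rho>}"
      using \<open>i0 \<in> {1..c}\<close> assms(1) by auto
    then have "real (m - 2 * c - 1) * \<rho>
        \<le> real (m - c - 2 - card {j \<in> {1..m} - {i0}. (dist (v i0) (v j))\<^sup>2 < \<rho>}) * \<rho>"
      unfolding \<rho>_def by (intro mult_right_mono) auto
    also have "\<dots> \<le> krum_score m c v i0"
      unfolding krum_score_def \<rho>_def
      using i0 assms(1) by (intro nearest_sqdist_sum_ge_count_closer) auto
    finally show ?thesis .
  qed
  have score_benign: "krum_score m c v i \<le> nearest_sqdist_sum (m - c - 2) w B i" if "i \<in> B" for i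
  proof -
    have "krum_score m c v i \<le> nearest_sqdist_sum (m - c - 2) v B i"
      unfolding krum_score_def using that by (intro nearest_sqdist_sum_antimono) (auto simp: B_def)
    also have "\<dots> = nearest_sqdist_sum (m - c - 2) w B i"
      using benign that unfolding B_def by (rule nearest_sqdist_sum_cong)
    finally show ?thesis .
  qed
  have "real (m - 2 * c - 1) * \<rho> \<le> Min ((\<lambda>i. nearest_sqdist_sum (m - c - 2) w B i) ` B)"
  proof (subst Min_ge_iff)
    show "\<forall>a\<in>(\<lambda>i. nearest_sqdist_sum (m - c - 2) w B i) ` B. real (m - 2 * c - 1) * \<rho> \<le> a"
      using score_i0 i0_min score_benign unfolding B_def by fastforce
  qed (use assms(1) in \<open>auto simp: B_def\<close>)
  with j0 show ?thesis using that unfolding \<rho>_def B_def by blast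
qed

lemma norm_sign_vector:
  fixes s :: "real^'n"
  assumes "\<forall>k. s $ k = 1 \<or> s $ k = -1"
  shows "norm s = sqrt (real CARD('n))"
proof -
  have "s \<bullet> s = (\<Sum>k\<in>(UNIV :: 'n set). 1)"
    unfolding inner_vec_def
  proof (rule sum.cong)
    fix k
    from assms have "s $ k = 1 \<or> s $ k = -1" by blast
    then show "s $ k \<bullet> s $ k = 1" by auto
  qed simp
  then show ?thesis by (simp add: norm_eq_sqrt_inner)
qed

theorem theorem1:
  fixes m c :: nat
    and w :: "nat \<Rightarrow> real^'d"
    and wRe s :: "real^'d"
    and lam :: real
  assumes "c > 0"
    and "m > 2 * c + 1"
    and "\<forall>k. s $ k = 1 \<or> s $ k = -1"
    and "krum_attack_feasible m c w wRe s lam"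
    and "\<forall>\<mu>. krum_attack_feasible m c w wRe s \<mu> \<longrightarrow> \<mu> \<le> lam"
  shows "lam \<le> sqrt (1 / (real (m - 2 * c - 1) * real CARD('d)) *
              Min ((\<lambda>i. nearest_sqdist_sum (m - c - 2) w {c+1..m} i) ` {c+1..m}))
            + 1 / sqrt (real CARD('d)) * Max ((\<lambda>i. dist (w i) wRe) ` {c+1..m})"
proof -
  define x where "x = wRe - lam *\<^sub>R s"
  define q where "q = real (m - 2 * c - 1)"
  define D where "D = real CARD('d)"
  define Mn where "Mn = Min ((\<lambda>i. nearest_sqdist_sum (m - c - 2) w {c+1..m} i) ` {c+1..m})"
  define Mx where "Mx = Max ((\<lambda>i. dist (w i) wRe) ` {c+1..m})"
  have "lam > 0" and selected: "krum_outputs m c (attacked_models c w wRe s lam) x"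
    using assms(4) unfolding krum_attack_feasible_def x_def by auto
  have "\<And>j. j \<in> {c+1..m} \<Longrightarrow> attacked_models c w wRe s lam j = w j"
    unfolding attacked_models_def by auto
  then obtain j where j: "j \<in> {c+1..m}" and "q * (dist x (w j))\<^sup>2 \<le> Mn"
    using krum_output_close_to_benign[OF assms(2) selected] unfolding q_def Mn_def by blast
  then have "dist x (w j) \<le> sqrt (Mn / q)"
    using assms(2) by (simp add: q_def real_le_rsqrt pos_le_divide_eq mult.commute)
  have "lam * sqrt D = dist x wRe"
    using norm_sign_vector[OF assms(3)] \<open>lam > 0\<close> by (simp add: x_def D_def dist_norm)
  also have "\<dots> \<le> dist x (w j) + dist (w j) wRe" by (rule dist_triangle)
  also have "\<dots> \<le> sqrt (Mn / q) + Mx"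
    using \<open>dist x (w j) \<le> sqrt (Mn / q)\<close> j unfolding Mx_def by (auto intro: add_mono Max_ge)
  finally have "lam \<le> (sqrt (Mn / q) + Mx) / sqrt D"
    by (simp add: D_def pos_le_divide_eq)
  then have "lam \<le> sqrt (Mn / q) / sqrt D + 1 / sqrt D * Mx"
    by (simp add: add_divide_distrib)
  then show ?thesis
    unfolding q_def D_def Mn_def Mx_def by (simp add: real_sqrt_divide real_sqrt_mult)
qed

end
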